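(* Let $M\ge 1$, and let $N_s,R_s$, and for each $m\in\{1,\dots,M\}$ let $N_{d,m},R_{d,m},D_m$ be positive integers, with $D=\sum_{m=1}^M D_m$. Let $P_t>0$, $\sigma_m>0$ and $\sigma_{e,m}\ge 0$ for each $m$. Let $\bar{\mathbf H}_m\in\mathbb C^{N_{d,m}\times N_s}$ be given matrices, let $\mathbf L\in\{0,1\}^{D\times D}$ be a fixed permutation matrix, and let $\mathbf A_m=[\mathbf 0_{D_m\times\sum_{i<m}D_i},\ \mathbf I_{D_m},\ \mathbf 0_{D_m\times\sum_{i>m}D_i}]$. The optimization variables are $\mathcal S=\{\{\mathbf P_m,\mathbf F_m\},\mathbf T,\mathbf W,\mathbf U\}$ with $\mathbf P_m\in\mathbb C^{D_m\times R_{d,m}}$, $\mathbf F_m\in\mathbb C^{R_{d,m}\times N_{d,m}}$, $\mathbf T\in\mathbb C^{N_s\times R_s}$, $\mathbf W\in\mathbb C^{R_s\times D}$, and $\mathbf U\in\mathbb C^{D\times D}$ lower triangular with all diagonal entries equal to $1$ (only its strictly lower triangular entries are free). Define $$\mathrm{MSE}=\sum_{m=1}^M \mathrm{tr}\Big(\mathbf P_m\mathbf F_m\bar{\mathbf H}_m\mathbf T\mathbf W\mathbf W^H\mathbf T^H\bar{\mathbf H}_m^H\mathbf F_m^H\mathbf P_m^H+\sigma_{e,m}^2\,\mathrm{tr}(\mathbf T\mathbf W\mathbf W^H\mathbf T^H)\,\mathbf P_m\mathbf F_m\mathbf F_m^H\mathbf P_m^H+\sigma_m^2\mathbf P_m\mathbf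 F_m\mathbf F_m^H\mathbf P_m^H-\mathbf P_m\mathbf F_m\bar{\mathbf H}_m\mathbf T\mathbf W\mathbf U^H\mathbf L\mathbf A_m^H-\mathbf A_m\mathbf L^T\mathbf U\mathbf W^H\mathbf T^H\bar{\mathbf H}_m^H\mathbf F_m^H\mathbf P_m^H\Big)+\mathrm{tr}(\mathbf U\mathbf U^H),$$ and, with $\hat{\mathbf H}_m=\bar{\mathbf H}_m/\sigma_m$ and $\hat\sigma_{e,m}=\sigma_{e,m}/\sigma_m$, $$\mathrm{MSE}_\sigma=\sum_{m=1}^M \mathrm{tr}\Big(\mathbf P_m\mathbf F_m\hat{\mathbf H}_m\mathbf T\mathbf W\mathbf W^H\mathbf T^H\hat{\mathbf H}_m^H\mathbf F_m^H\mathbf P_m^H+\hat\sigma_{e,m}^2\,\mathrm{tr}(\mathbf T\mathbf W\mathbf W^H\mathbf T^H)\,\mathbf P_m\mathbf F_m\mathbf F_m^H\mathbf P_m^H+\tfrac{1}{P_t}\mathrm{tr}(\mathbf T\mathbf W\mathbf W^H\mathbf T^H)\,\mathbf P_m\mathbf F_m\mathbf F_m^H\mathbf P_m^H-\mathbf P_m\mathbf F_m\hat{\mathbf H}_m\mathbf T\mathbf W\mathbf U^H\mathbf L\mathbf A_m^H-\mathbf A_m\mathbf L^T\mathbf U\mathbf W^H\mathbf T^H\hat{\mathbf H}_m^H\mathbf F_m^H\mathbf P_m^H\Big)+\mathrm{tr}(\mathbf U\mathbf U^H).$$ Consider problem (I): minimize $\mathrm{MSE}$ over $\mathcal S$ subject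 to $|[\mathbf F_m]_{i,j}|=1$ for all $m,i,j$, $|[\mathbf T]_{i,j}|=1$ for all $i,j$, and $\|\mathbf T\mathbf W\|^2\le P_t$; and problem (II): minimize $\mathrm{MSE}_\sigma$ over $\mathcal S$ subject only to $|[\mathbf F_m]_{i,j}|=1$ for all $m,i,j$ and $|[\mathbf T]_{i,j}|=1$ for all $i,j$. Let $(\{\mathbf P_m^\star,\mathbf F_m^\star\},\mathbf T^\star,\mathbf W^\star,\mathbf U^\star)$ be a KKT solution of problem (II), and let $a=\sqrt{P_t}/\|\mathbf T^\star\mathbf W^\star\|$. Then $(\{\tfrac{1}{a\sigma_m}\mathbf P_m^\star,\mathbf F_m^\star\},\mathbf T^\star,a\mathbf W^\star,\mathbf U^\star)$ is a KKT solution of problem (I).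
   Context: $\|\cdot\|$ denotes the Frobenius norm; $(\cdot)^H$ is conjugate transpose. KKT solutions are understood for the real optimization problems obtained by treating real and imaginary parts of the complex variables (equivalently, Wirtinger derivatives with respect to conjugate variables), with the unit-modulus conditions as equality constraints and $\|\mathbf T\mathbf W\|^2\le P_t$ as an inequality constraint. The scaling factor $a$ is defined by the given formula (so $\mathbf T^\star\mathbf W^\star\neq \mathbf 0$ is implicit). *)

theory Defs
  imports "HOL-Analysis.Analysis"
begin

type_synonym cmat = "nat \<Rightarrow> nat \<Rightarrow> complex"

definition mmul :: "nat \<Rightarrow> cmat \<Rightarrow> cmat \<Rightarrow> cmat" where
  "mmul n A B = (\<lambda>i j. \<Sum>k<n. A i k * B k j)"

definition ctr :: "cmat \<Rightarrow> cmat" where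
  "ctr A = (\<lambda>i j. cnj (A j i))"

definition trn :: "cmat \<Rightarrow> cmat" where
  "trn A = (\<lambda>i j. A j i)"

definition mtrace :: "nat \<Rightarrow> cmat \<Rightarrow> complex" where
  "mtrace n A = (\<Sum>i<n. A i i)"

definition smul :: "complex \<Rightarrow> cmat \<Rightarrow> cmat" where
  "smul c A = (\<lambda>i j. c * A i j)"

definition madd :: "cmat \<Rightarrow> cmat \<Rightarrow> cmat" where
  "madd A B = (\<lambda>i j. A i j + B i j)"

definition msub :: "cmat \<Rightarrow> cmat \<Rightarrow> cmat" where
  "msub A B = (\<lambda>i j. A i j - B i j)"

definition idm :: cmat where
  "idm = (\<lambda>i j. if i = j then 1 else 0)"

definition fro2 :: "nat \<Rightarrow> nat \<Rightarrow> cmat \<Rightarrow> real" where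
  "fro2 r c A = (\<Sum>i<r. \<Sum>j<c. (cmod (A i j))\<^sup>2)"

definition is_perm_matrix :: "nat \<Rightarrow> (nat \<Rightarrow> nat \<Rightarrow> real) \<Rightarrow> bool" where
  "is_perm_matrix D L \<longleftrightarrow> (\<exists>p. bij_betw p {..<D} {..<D} \<and>
      (\<forall>i<D. \<forall>j<D. L i j = (if j = p i then 1 else 0)))"

text \<open>Selection matrix A_m = [0, I_{D_m}, 0] (0-indexed users m < M), of size D_m x D.\<close>
definition Asel :: "(nat \<Rightarrow> nat) \<Rightarrow> nat \<Rightarrow> cmat" where
  "Asel Dd m = (\<lambda>i j. if i < Dd m \<and> j = (\<Sum>k<m. Dd k) + i then 1 else 0)"

text \<open>A point assigns to each block (P, F, T, W, U), user index m, and entry (i,j)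
  a complex number.  T, W, U do not depend on m (only m = 0 is used).\<close>
datatype blk = BP | BF | BT | BW | BU
datatype part = ReP | ImP

type_synonym var = "blk \<Rightarrow> nat \<Rightarrow> nat \<Rightarrow> nat \<Rightarrow> complex"
type_synonym coord = "blk \<times> nat \<times> nat \<times> nat \<times> part"

definition get_coord :: "var \<Rightarrow> coord \<Rightarrow> real" where
  "get_coord x c = (case c of (b, m, i, j, p) \<Rightarrow>
      (if p = ReP then Re (x b m i j) else Im (x b m i j)))"

definition set_coord :: "var \<Rightarrow> coord \<Rightarrow> real \<Rightarrow> var" where
  "set_coord x c t = (case c of (b, m, i, j, p) \<Rightarrow>
      (\<lambda>b' m' i' j'. if (b', m', i', j') = (b, m, i, j)
          then (if p = ReP then Complex t (Im (x b m i j)) else Complex (Re (x b m i j)) t)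
          else x b' m' i' j'))"

definition pdiff :: "(var \<Rightarrow> real) \<Rightarrow> var \<Rightarrow> coord \<Rightarrow> bool" where
  "pdiff f x c \<longleftrightarrow> (\<exists>d. ((\<lambda>t. f (set_coord x c t)) has_real_derivative d) (at (get_coord x c)))"

definition pd :: "(var \<Rightarrow> real) \<Rightarrow> var \<Rightarrow> coord \<Rightarrow> real" where
  "pd f x c = (THE d. ((\<lambda>t. f (set_coord x c t)) has_real_derivative d) (at (get_coord x c)))"

definition KKT :: "coord set \<Rightarrow> (var \<Rightarrow> real) \<Rightarrow> 'e set \<Rightarrow> ('e \<Rightarrow> var \<Rightarrow> real)
    \<Rightarrow> 'i set \<Rightarrow> ('i \<Rightarrow> var \<Rightarrow> real) \<Rightarrow> var \<Rightarrow> bool" where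
  "KKT C f E g I h x \<longleftrightarrow>
     (\<forall>e\<in>E. g e x = 0) \<and> (\<forall>i\<in>I. h i x \<le> 0) \<and>
     (\<forall>c\<in>C. pdiff f x c \<and> (\<forall>e\<in>E. pdiff (g e) x c) \<and> (\<forall>i\<in>I. pdiff (h i) x c)) \<and>
     (\<exists>lam mu. (\<forall>i\<in>I. mu i \<ge> (0::real) \<and> mu i * h i x = 0) \<and>
        (\<forall>c\<in>C. pd f x c + (\<Sum>e\<in>E. (lam e :: real) * pd (g e) x c)
                 + (\<Sum>i\<in>I. mu i * pd (h i) x c) = 0))"

definition Ueff :: "var \<Rightarrow> cmat" where
  "Ueff x = (\<lambda>i j. if i = j then 1 else if j < i then x BU 0 i j else 0)"

definition free_coords :: "nat \<Rightarrow> nat \<Rightarrow> nat \<Rightarrow> (nat \<Rightarrow> nat) \<Rightarrow> (nat \<Rightarrow> nat) \<Rightarrow> (nat \<Rightarrow> nat)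
     \<Rightarrow> coord set" where
  "free_coords M Ns Rs Nd Rd Dd = (let D = (\<Sum>m<M. Dd m) in
      {(BP, m, i, j, p) | m i j p. m < M \<and> i < Dd m \<and> j < Rd m}
    \<union> {(BF, m, i, j, p) | m i j p. m < M \<and> i < Rd m \<and> j < Nd m}
    \<union> {(BT, 0, i, j, p) | i j p. i < Ns \<and> j < Rs}
    \<union> {(BW, 0, i, j, p) | i j p. i < Rs \<and> j < D}
    \<union> {(BU, 0, i, j, p) | i j p. i < D \<and> j < i})"

definition um_idx :: "nat \<Rightarrow> nat \<Rightarrow> nat \<Rightarrow> (nat \<Rightarrow> nat) \<Rightarrow> (nat \<Rightarrow> nat)
     \<Rightarrow> (blk \<times> nat \<times> nat \<times> nat) set" where
  "um_idx M Ns Rs Nd Rd =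
      {(BF, m, i, j) | m i j. m < M \<and> i < Rd m \<and> j < Nd m}
    \<union> {(BT, 0, i, j) | i j. i < Ns \<and> j < Rs}"

definition um_con :: "blk \<times> nat \<times> nat \<times> nat \<Rightarrow> var \<Rightarrow> real" where
  "um_con e x = (case e of (b, m, i, j) \<Rightarrow> cmod (x b m i j) - 1)"

definition TWm :: "nat \<Rightarrow> var \<Rightarrow> cmat" where
  "TWm Rs x = mmul Rs (x BT 0) (x BW 0)"

definition dimD :: "nat \<Rightarrow> (nat \<Rightarrow> nat) \<Rightarrow> nat" where
  "dimD M Dd = (\<Sum>k<M. Dd k)"

definition trTW :: "nat \<Rightarrow> nat \<Rightarrow> nat \<Rightarrow> (nat \<Rightarrow> nat) \<Rightarrow> var \<Rightarrow> complex" where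
  "trTW M Ns Rs Dd x = mtrace Ns (mmul (dimD M Dd) (TWm Rs x) (ctr (TWm Rs x)))"

definition mse_mat :: "nat \<Rightarrow> nat \<Rightarrow> nat \<Rightarrow> (nat \<Rightarrow> nat) \<Rightarrow> (nat \<Rightarrow> nat) \<Rightarrow> (nat \<Rightarrow> nat)
    \<Rightarrow> (nat \<Rightarrow> nat \<Rightarrow> real) \<Rightarrow> nat \<Rightarrow> cmat \<Rightarrow> real \<Rightarrow> complex \<Rightarrow> var \<Rightarrow> cmat" where
  "mse_mat M Ns Rs Nd Rd Dd L m H ce cn x = (let
      D = dimD M Dd;
      P = x BP m; F = x BF m; U = Ueff x;
      Lc = (\<lambda>i j. complex_of_real (L i j));
      A = Asel Dd m;
      PF = mmul (Rd m) P F;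
      G = mmul Ns (mmul (Nd m) PF H) (TWm Rs x);
      PFPF = mmul (Nd m) PF (ctr PF)
    in msub (msub
         (madd (madd (mmul D G (ctr G))
                     (smul (complex_of_real ce * trTW M Ns Rs Dd x) PFPF))
               (smul cn PFPF))
         (mmul D (mmul D (mmul D G (ctr U)) Lc) (ctr A)))
         (mmul D (mmul D (mmul D A (trn Lc)) U) (ctr G)))"

text \<open>MSE of problem (I) (real-valued; Re is taken to view it as a real function).\<close>
definition MSE :: "nat \<Rightarrow> nat \<Rightarrow> nat \<Rightarrow> (nat \<Rightarrow> nat) \<Rightarrow> (nat \<Rightarrow> nat) \<Rightarrow> (nat \<Rightarrow> nat)
    \<Rightarrow> (nat \<Rightarrow> nat \<Rightarrow> real) \<Rightarrow> (nat \<Rightarrow> cmat) \<Rightarrow> (nat \<Rightarrow> real) \<Rightarrow> (nat \<Rightarrow> real)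
    \<Rightarrow> var \<Rightarrow> real" where
  "MSE M Ns Rs Nd Rd Dd L Hbar sig sige x =
     Re ((\<Sum>m<M. mtrace (Dd m)
            (mse_mat M Ns Rs Nd Rd Dd L m (Hbar m) ((sige m)\<^sup>2) (complex_of_real ((sig m)\<^sup>2)) x))
         + mtrace (dimD M Dd) (mmul (dimD M Dd) (Ueff x) (ctr (Ueff x))))"

definition MSEs :: "nat \<Rightarrow> nat \<Rightarrow> nat \<Rightarrow> (nat \<Rightarrow> nat) \<Rightarrow> (nat \<Rightarrow> nat) \<Rightarrow> (nat \<Rightarrow> nat)
    \<Rightarrow> (nat \<Rightarrow> nat \<Rightarrow> real) \<Rightarrow> (nat \<Rightarrow> cmat) \<Rightarrow> (nat \<Rightarrow> real) \<Rightarrow> (nat \<Rightarrow> real) \<Rightarrow> real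
    \<Rightarrow> var \<Rightarrow> real" where
  "MSEs M Ns Rs Nd Rd Dd L Hbar sig sige Pt x =
     Re ((\<Sum>m<M. mtrace (Dd m)
            (mse_mat M Ns Rs Nd Rd Dd L m (smul (complex_of_real (1 / sig m)) (Hbar m))
               ((sige m / sig m)\<^sup>2)
               (complex_of_real (1 / Pt) * trTW M Ns Rs Dd x) x))
         + mtrace (dimD M Dd) (mmul (dimD M Dd) (Ueff x) (ctr (Ueff x))))"

definition pow_con :: "nat \<Rightarrow> nat \<Rightarrow> nat \<Rightarrow> (nat \<Rightarrow> nat) \<Rightarrow> real \<Rightarrow> unit \<Rightarrow> var \<Rightarrow> real" where
  "pow_con M Ns Rs Dd Pt u x = fro2 Ns (dimD M Dd) (TWm Rs x) - Pt"

definition scale_point :: "real \<Rightarrow> (nat \<Rightarrow> real) \<Rightarrow> var \<Rightarrow> var" where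
  "scale_point a sig x = (\<lambda>b m i j. case b of
      BP \<Rightarrow> x BP m i j / complex_of_real (a * sig m)
    | BW \<Rightarrow> complex_of_real a * x BW m i j
    | _ \<Rightarrow> x b m i j)"

end

theory Submission
  imports Defs
begin

(* Replacing P_m by P_m/(a sigma_m) and W by a W turns MSE into MSE_sigma plus
   (1/a^2 - ||TW||^2/P_t) * sum_m ||P_m F_m||^2, and ||T (a W)||^2 = a^2 ||TW||^2.
   Along each real coordinate this substitution is a linear reparametrisation t |-> s t, so
   partial derivatives at the scaled point are s times those at the original point.
   For the a of the theorem the power constraint is active, the coefficient above vanishes,
   and the derivative of the correction term is cancelled by the multiplier
   mu = sum_m ||P_m F_m||^2 / (a^2 P_t) >= 0 of the power constraint. *)

lemma mmul_smul_left: "mmul n (smul k A) B = smul k (mmul n A B)"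
  unfolding mmul_def smul_def by (simp add: sum_distrib_left mult.assoc)

lemma mmul_smul_right: "mmul n A (smul k B) = smul k (mmul n A B)"
  unfolding mmul_def smul_def by (simp add: sum_distrib_left mult.left_commute)

lemma ctr_smul: "ctr (smul k A) = smul (cnj k) (ctr A)"
  unfolding ctr_def smul_def by simp

lemma smul_smul: "smul k (smul l A) = smul (k * l) A"
  unfolding smul_def by (simp add: mult.assoc)

lemma mtrace_madd: "mtrace n (madd A B) = mtrace n A + mtrace n B"
  unfolding mtrace_def madd_def by (simp add: sum.distrib)

lemma mtrace_smul: "mtrace n (smul k A) = k * mtrace n A"
  unfolding mtrace_def smul_def by (simp add: sum_distrib_left)

lemma mtrace_mmul_ctr: "mtrace r (mmul c A (ctr A)) = complex_of_real (fro2 r c A)"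
  unfolding mtrace_def mmul_def ctr_def fro2_def
  by (simp flip: complex_norm_square)

lemma fro2_nonneg: "fro2 r c A \<ge> 0"
  unfolding fro2_def by (intro sum_nonneg) auto

lemma fro2_smul: "fro2 r c (smul k A) = (cmod k)\<^sup>2 * fro2 r c A"
  unfolding fro2_def smul_def by (simp add: norm_mult power_mult_distrib sum_distrib_left)

lemma differentiable_bounded_linear_compose:
  "bounded_linear g \<Longrightarrow> f differentiable (at t) \<Longrightarrow> (\<lambda>s. g (f s)) differentiable (at t)"
  by (rule differentiable_compose[OF bounded_linear_imp_differentiable])

definition mat_differentiable :: "(real \<Rightarrow> cmat) \<Rightarrow> real \<Rightarrow> bool" where
  "mat_differentiable A t \<longleftrightarrow> (\<forall>i j. (\<lambda>s. A s i j) differentiable (at t))"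

lemma mat_differentiable_mmul:
  "mat_differentiable A t \<Longrightarrow> mat_differentiable B t
    \<Longrightarrow> mat_differentiable (\<lambda>s. mmul n (A s) (B s)) t"
  unfolding mat_differentiable_def mmul_def by (auto intro!: differentiable_sum differentiable_mult)

lemma mat_differentiable_ctr: "mat_differentiable A t \<Longrightarrow> mat_differentiable (\<lambda>s. ctr (A s)) t"
  unfolding mat_differentiable_def ctr_def
  by (auto intro: differentiable_bounded_linear_compose[OF bounded_linear_cnj])

lemma mat_differentiable_set_coord: "mat_differentiable (\<lambda>s. set_coord x c s b m) t"
proof -
  obtain b0 m0 i0 j0 p0 where c: "c = (b0, m0, i0, j0, p0)"
    by (cases c)
  have "(\<lambda>s. set_coord x c s b m i j) differentiable (at t)" for i j
    unfolding set_coord_def c Complex_eq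
    by (cases "(b, m, i, j) = (b0, m0, i0, j0)"; cases "p0 = ReP") auto
  then show ?thesis
    unfolding mat_differentiable_def by blast
qed

lemma fro2_differentiable:
  assumes "mat_differentiable A t"
  shows "(\<lambda>s. fro2 r c (A s)) differentiable (at t)"
proof -
  have "mat_differentiable (\<lambda>s. mmul c (A s) (ctr (A s))) t"
    using assms by (intro mat_differentiable_mmul mat_differentiable_ctr)
  then have "(\<lambda>s. Re (mtrace r (mmul c (A s) (ctr (A s))))) differentiable (at t)"
    unfolding mat_differentiable_def mtrace_def
    by (intro differentiable_bounded_linear_compose[OF bounded_linear_Re] differentiable_sum) simp_all
  then show ?thesis
    by (simp add: mtrace_mmul_ctr)
qed

lemma pdiff_iff_differentiable:
  "pdiff f x c \<longleftrightarrow> (\<lambda>t. f (set_coord x c t)) differentiable (at (get_coord x c))"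
  unfolding pdiff_def real_differentiable_def ..

lemma pd_eqI:
  "((\<lambda>t. f (set_coord x c t)) has_real_derivative d) (at (get_coord x c)) \<Longrightarrow> pd f x c = d"
  unfolding pd_def by (blast intro: DERIV_unique)

lemma pd_has_real_derivative:
  "pdiff f x c \<Longrightarrow> ((\<lambda>t. f (set_coord x c t)) has_real_derivative pd f x c) (at (get_coord x c))"
  unfolding pdiff_def using pd_eqI by metis

lemma pd_rescale:
  assumes line: "\<And>t. f (set_coord y c t) = g (set_coord x c (s * t))"
    and start: "s * get_coord y c = get_coord x c"
    and "pdiff g x c"
  shows "pdiff f y c" and "pd f y c = s * pd g x c"
proof -
  have "((\<lambda>t. g (set_coord x c (s * t))) has_real_derivative pd g x c * s) (at (get_coord y c))"
    using DERIV_chain2[OF pd_has_real_derivative[OF \<open>pdiff g x c\<close>, folded start] DERIV_cmult_Id] .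
  then have "((\<lambda>t. f (set_coord y c t)) has_real_derivative s * pd g x c) (at (get_coord y c))"
    by (simp add: line mult.commute)
  then show "pdiff f y c" "pd f y c = s * pd g x c"
    unfolding pdiff_def by (auto intro: pd_eqI)
qed

lemma set_coord_get_coord: "set_coord x c (get_coord x c) = x"
  by (cases c) (auto simp: fun_eq_iff set_coord_def get_coord_def complex_eq_iff)

lemma scale_point_blocks:
  "scale_point a sig z BP m = smul (complex_of_real (1 / (a * sig m))) (z BP m)"
  "scale_point a sig z BF m = z BF m"
  "scale_point a sig z BT m = z BT m"
  "scale_point a sig z BW m = smul (complex_of_real a) (z BW m)"
  "scale_point a sig z BU m = z BU m"
  unfolding scale_point_def smul_def by (auto simp: fun_eq_iff divide_inverse mult.commute)

lemma Ueff_scale_point: "Ueff (scale_point a sig z) = Ueff z"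
  unfolding Ueff_def scale_point_blocks ..

lemma TWm_scale_point: "TWm Rs (scale_point a sig z) = smul (complex_of_real a) (TWm Rs z)"
  unfolding TWm_def scale_point_blocks mmul_smul_right ..

lemma fro2_TWm_scale_point:
  "fro2 Ns D (TWm Rs (scale_point a sig z)) = a\<^sup>2 * fro2 Ns D (TWm Rs z)"
  unfolding TWm_scale_point fro2_smul by simp

lemma trTW_eq_fro2: "trTW M Ns Rs Dd z = complex_of_real (fro2 Ns (dimD M Dd) (TWm Rs z))"
  unfolding trTW_def mtrace_mmul_ctr ..

lemma trTW_scale_point:
  "trTW M Ns Rs Dd (scale_point a sig z) = complex_of_real (a\<^sup>2) * trTW M Ns Rs Dd z"
  unfolding trTW_eq_fro2 fro2_TWm_scale_point by simp

definition PF_mat :: "(nat \<Rightarrow> nat) \<Rightarrow> nat \<Rightarrow> var \<Rightarrow> cmat" where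
  "PF_mat Rd m z = mmul (Rd m) (z BP m) (z BF m)"

definition PF_energy ::
    "nat \<Rightarrow> (nat \<Rightarrow> nat) \<Rightarrow> (nat \<Rightarrow> nat) \<Rightarrow> (nat \<Rightarrow> nat) \<Rightarrow> var \<Rightarrow> real" where
  "PF_energy M Nd Rd Dd z = (\<Sum>m<M. fro2 (Dd m) (Nd m) (PF_mat Rd m z))"

lemma mse_mat_scale_point:
  assumes "a \<noteq> 0" and "sig m \<noteq> 0"
  shows "mse_mat M Ns Rs Nd Rd Dd L m (Hbar m) ((sige m)\<^sup>2) (complex_of_real ((sig m)\<^sup>2))
           (scale_point a sig z)
    = madd (mse_mat M Ns Rs Nd Rd Dd L m (smul (complex_of_real (1 / sig m)) (Hbar m))
              ((sige m / sig m)\<^sup>2) (complex_of_real (1 / Pt) * trTW M Ns Rs Dd z) z)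
        (smul (complex_of_real (1 / a\<^sup>2) - trTW M Ns Rs Dd z / complex_of_real Pt)
          (mmul (Nd m) (PF_mat Rd m z) (ctr (PF_mat Rd m z))))"
  unfolding mse_mat_def Let_def scale_point_blocks Ueff_scale_point TWm_scale_point
    trTW_scale_point PF_mat_def
  unfolding mmul_smul_left mmul_smul_right ctr_smul smul_smul
  using assms
  by (simp add: fun_eq_iff smul_def madd_def msub_def power2_eq_square field_simps)

lemma MSE_scale_point:
  assumes "a \<noteq> 0" and "\<forall>m<M. sig m \<noteq> 0"
  shows "MSE M Ns Rs Nd Rd Dd L Hbar sig sige (scale_point a sig z)
    = MSEs M Ns Rs Nd Rd Dd L Hbar sig sige Pt z
      + (1 / a\<^sup>2 - fro2 Ns (dimD M Dd) (TWm Rs z) / Pt) * PF_energy M Nd Rd Dd z"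
proof -
  have "mtrace (Dd m) (mse_mat M Ns Rs Nd Rd Dd L m (Hbar m) ((sige m)\<^sup>2)
          (complex_of_real ((sig m)\<^sup>2)) (scale_point a sig z))
     = mtrace (Dd m) (mse_mat M Ns Rs Nd Rd Dd L m (smul (complex_of_real (1 / sig m)) (Hbar m))
          ((sige m / sig m)\<^sup>2) (complex_of_real (1 / Pt) * trTW M Ns Rs Dd z) z)
       + complex_of_real ((1 / a\<^sup>2 - fro2 Ns (dimD M Dd) (TWm Rs z) / Pt)
           * fro2 (Dd m) (Nd m) (PF_mat Rd m z))" if "m < M" for m
  proof -
    have sig_m: "sig m \<noteq> 0"
      using assms(2) that by blast
    show ?thesis
      unfolding mse_mat_scale_point[where Pt = Pt and sig = sig and m = m, OF assms(1) sig_m]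
        mtrace_madd mtrace_smul mtrace_mmul_ctr trTW_eq_fro2
      by simp
  qed
  then show ?thesis
    unfolding MSE_def MSEs_def PF_energy_def Ueff_scale_point
    by (simp add: sum.distrib sum_distrib_left)
qed

lemma um_con_scale_point:
  "e \<in> um_idx M Ns Rs Nd Rd \<Longrightarrow> um_con e (scale_point a sig z) = um_con e z"
  unfolding um_idx_def um_con_def scale_point_def by auto

lemma pow_con_scale_point:
  "pow_con M Ns Rs Dd Pt u (scale_point a sig z) = a\<^sup>2 * fro2 Ns (dimD M Dd) (TWm Rs z) - Pt"
  unfolding pow_con_def fro2_TWm_scale_point ..

lemma PF_energy_nonneg: "PF_energy M Nd Rd Dd z \<ge> 0"
  unfolding PF_energy_def by (intro sum_nonneg fro2_nonneg)

definition coord_scale :: "real \<Rightarrow> (nat \<Rightarrow> real) \<Rightarrow> coord \<Rightarrow> real" where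
  "coord_scale a sig c = (case c of (b, m, _) \<Rightarrow> (case b of BP \<Rightarrow> a * sig m | BW \<Rightarrow> 1 / a | _ \<Rightarrow> 1))"

lemma coord_scale_free_coords_nonzero:
  assumes "a \<noteq> 0" and "\<forall>m<M. sig m \<noteq> 0" and "c \<in> free_coords M Ns Rs Nd Rd Dd"
  shows "coord_scale a sig c \<noteq> 0"
  using assms unfolding free_coords_def coord_scale_def Let_def by auto

lemma set_coord_scale_point:
  assumes "coord_scale a sig c \<noteq> 0"
  shows "set_coord (scale_point a sig x) c t
    = scale_point a sig (set_coord x c (coord_scale a sig c * t))"
  using assms
  by (cases c) (auto simp: fun_eq_iff set_coord_def scale_point_def coord_scale_def complex_eq_iff
      split: blk.split)

lemma get_coord_scale_point:
  assumes "coord_scale a sig c \<noteq> 0"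
  shows "coord_scale a sig c * get_coord (scale_point a sig x) c = get_coord x c"
  using assms
  by (cases c) (auto simp: get_coord_def scale_point_def coord_scale_def split: blk.split)

lemma pd_scale_point:
  assumes "coord_scale a sig c \<noteq> 0"
    and "\<And>z. f (scale_point a sig z) = g z" and "pdiff g x c"
  shows "pdiff f (scale_point a sig x) c"
    and "pd f (scale_point a sig x) c = coord_scale a sig c * pd g x c"
proof -
  have "f (set_coord (scale_point a sig x) c t) = g (set_coord x c (coord_scale a sig c * t))" for t
    using assms(2) set_coord_scale_point[OF assms(1)] by simp
  from pd_rescale[OF this get_coord_scale_point[OF assms(1)] assms(3)]
  show "pdiff f (scale_point a sig x) c"
    and "pd f (scale_point a sig x) c = coord_scale a sig c * pd g x c" .
qed

lemma pdiff_fro2_TWm: "pdiff (\<lambda>z. fro2 Ns D (TWm Rs z)) x c"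
  unfolding pdiff_iff_differentiable TWm_def
  by (intro fro2_differentiable mat_differentiable_mmul mat_differentiable_set_coord)

lemma pdiff_PF_energy: "pdiff (PF_energy M Nd Rd Dd) x c"
  unfolding pdiff_iff_differentiable PF_energy_def PF_mat_def
  by (intro differentiable_sum ballI finite_lessThan fro2_differentiable mat_differentiable_mmul
      mat_differentiable_set_coord)

lemma pd_MSE_scale_point:
  assumes "coord_scale a sig c \<noteq> 0" and "a \<noteq> 0" and "\<forall>m<M. sig m \<noteq> 0" and "Pt > 0"
    and balance: "a\<^sup>2 * fro2 Ns (dimD M Dd) (TWm Rs x) = Pt"
    and "pdiff (MSEs M Ns Rs Nd Rd Dd L Hbar sig sige Pt) x c"
  shows "pdiff (MSE M Ns Rs Nd Rd Dd L Hbar sig sige) (scale_point a sig x) c"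
    and "pd (MSE M Ns Rs Nd Rd Dd L Hbar sig sige) (scale_point a sig x) c
      = coord_scale a sig c * (pd (MSEs M Ns Rs Nd Rd Dd L Hbar sig sige Pt) x c
          - pd (\<lambda>z. fro2 Ns (dimD M Dd) (TWm Rs z)) x c * PF_energy M Nd Rd Dd x / Pt)"
proof -
  let ?F = "\<lambda>z. fro2 Ns (dimD M Dd) (TWm Rs z)"
  let ?Q = "PF_energy M Nd Rd Dd"
  let ?g = "\<lambda>z. MSEs M Ns Rs Nd Rd Dd L Hbar sig sige Pt z + (1 / a\<^sup>2 - ?F z / Pt) * ?Q z"
  have "((\<lambda>t. ?g (set_coord x c t)) has_real_derivative
      pd (MSEs M Ns Rs Nd Rd Dd L Hbar sig sige Pt) x c
        + (- pd ?F x c / Pt * ?Q x + (1 / a\<^sup>2 - ?F x / Pt) * pd ?Q x c)) (at (get_coord x c))"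
    using pd_has_real_derivative[OF assms(6)]
      pd_has_real_derivative[OF pdiff_fro2_TWm[where D = "dimD M Dd" and x = x and c = c]]
      pd_has_real_derivative[OF pdiff_PF_energy[where x = x and c = c]] \<open>Pt > 0\<close>
    by (auto intro!: derivative_eq_intros simp: set_coord_get_coord)
  moreover have "1 / a\<^sup>2 - ?F x / Pt = 0"
    using balance \<open>a \<noteq> 0\<close> \<open>Pt > 0\<close> by (auto simp: field_simps)
  ultimately have "pdiff ?g x c"
    and "pd ?g x c = pd (MSEs M Ns Rs Nd Rd Dd L Hbar sig sige Pt) x c - pd ?F x c * ?Q x / Pt"
    unfolding pdiff_def by (auto dest: pd_eqI)
  with pd_scale_point[where f = "MSE M Ns Rs Nd Rd Dd L Hbar sig sige" and g = ?g,
      OF assms(1) MSE_scale_point[OF assms(2,3)]]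
  show "pdiff (MSE M Ns Rs Nd Rd Dd L Hbar sig sige) (scale_point a sig x) c"
    and "pd (MSE M Ns Rs Nd Rd Dd L Hbar sig sige) (scale_point a sig x) c
      = coord_scale a sig c * (pd (MSEs M Ns Rs Nd Rd Dd L Hbar sig sige Pt) x c
          - pd ?F x c * ?Q x / Pt)"
    by auto
qed

lemma pd_pow_con_scale_point:
  assumes "coord_scale a sig c \<noteq> 0"
  shows "pdiff (pow_con M Ns Rs Dd Pt u) (scale_point a sig x) c"
    and "pd (pow_con M Ns Rs Dd Pt u) (scale_point a sig x) c
      = coord_scale a sig c * (a\<^sup>2 * pd (\<lambda>z. fro2 Ns (dimD M Dd) (TWm Rs z)) x c)"
proof -
  let ?F = "\<lambda>z. fro2 Ns (dimD M Dd) (TWm Rs z)"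
  have "((\<lambda>t. a\<^sup>2 * ?F (set_coord x c t) - Pt) has_real_derivative a\<^sup>2 * pd ?F x c)
      (at (get_coord x c))"
    using pd_has_real_derivative[OF pdiff_fro2_TWm[where D = "dimD M Dd" and x = x and c = c]]
    by (auto intro!: derivative_eq_intros)
  then have "pdiff (\<lambda>z. a\<^sup>2 * ?F z - Pt) x c"
    and "pd (\<lambda>z. a\<^sup>2 * ?F z - Pt) x c = a\<^sup>2 * pd ?F x c"
    unfolding pdiff_def by (auto dest: pd_eqI)
  with pd_scale_point[where f = "pow_con M Ns Rs Dd Pt u" and g = "\<lambda>z. a\<^sup>2 * ?F z - Pt",
      OF assms pow_con_scale_point]
  show "pdiff (pow_con M Ns Rs Dd Pt u) (scale_point a sig x) c"
    and "pd (pow_con M Ns Rs Dd Pt u) (scale_point a sig x) c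
      = coord_scale a sig c * (a\<^sup>2 * pd ?F x c)"
    by auto
qed

lemma pd_um_con_scale_point:
  assumes "coord_scale a sig c \<noteq> 0" and "e \<in> um_idx M Ns Rs Nd Rd" and "pdiff (um_con e) x c"
  shows "pdiff (um_con e) (scale_point a sig x) c"
    and "pd (um_con e) (scale_point a sig x) c = coord_scale a sig c * pd (um_con e) x c"
  using pd_scale_point[OF assms(1) um_con_scale_point[OF assms(2)] assms(3)] by auto

lemma KKT_with_active_inequality:
  fixes h :: "'e \<Rightarrow> var \<Rightarrow> real" and k :: "unit \<Rightarrow> var \<Rightarrow> real"
  assumes "KKT C g E h ({} :: unit set) (\<lambda>_ _. 0) x"
    and "\<forall>e\<in>E. h e y = 0" and "k () y = 0" and "mu \<ge> 0"
    and grad: "\<And>c. c \<in> C \<Longrightarrow> pdiff g x c \<Longrightarrow> \<forall>e\<in>E. pdiff (h e) x c \<Longrightarrow>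
      pdiff f y c \<and> pdiff (k ()) y c \<and> pd f y c + mu * pd (k ()) y c = s c * pd g x c
      \<and> (\<forall>e\<in>E. pdiff (h e) y c \<and> pd (h e) y c = s c * pd (h e) x c)"
  shows "KKT C f E h {()} k y"
proof -
  from assms(1) obtain lam where
    diff: "\<forall>c\<in>C. pdiff g x c \<and> (\<forall>e\<in>E. pdiff (h e) x c)" and
    stat: "\<forall>c\<in>C. pd g x c + (\<Sum>e\<in>E. lam e * pd (h e) x c) = 0"
    unfolding KKT_def by auto
  have "pdiff f y c \<and> (\<forall>e\<in>E. pdiff (h e) y c) \<and> pdiff (k ()) y c
    \<and> pd f y c + (\<Sum>e\<in>E. lam e * pd (h e) y c) + mu * pd (k ()) y c = 0" if "c \<in> C" for c
  proof -
    from grad[OF that] diff that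
    have "pdiff f y c \<and> (\<forall>e\<in>E. pdiff (h e) y c) \<and> pdiff (k ()) y c
      \<and> pd f y c + (\<Sum>e\<in>E. lam e * pd (h e) y c) + mu * pd (k ()) y c
        = s c * (pd g x c + (\<Sum>e\<in>E. lam e * pd (h e) x c))"
      by (simp add: algebra_simps sum_distrib_left)
    with stat that show ?thesis
      by simp
  qed
  with assms(2-4) show ?thesis
    unfolding KKT_def by (auto intro!: exI[of _ lam] exI[of _ "\<lambda>_ :: unit. mu"])
qed

lemma pd_MSE_pow_con_multiplier:
  assumes s: "coord_scale a sig c \<noteq> 0" and "a \<noteq> 0" and "\<forall>m<M. sig m \<noteq> 0" and "Pt > 0"
    and balance: "a\<^sup>2 * fro2 Ns (dimD M Dd) (TWm Rs x) = Pt"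
    and "pdiff (MSEs M Ns Rs Nd Rd Dd L Hbar sig sige Pt) x c"
  shows "pd (MSE M Ns Rs Nd Rd Dd L Hbar sig sige) (scale_point a sig x) c
      + PF_energy M Nd Rd Dd x / (a\<^sup>2 * Pt) * pd (pow_con M Ns Rs Dd Pt u) (scale_point a sig x) c
    = coord_scale a sig c * pd (MSEs M Ns Rs Nd Rd Dd L Hbar sig sige Pt) x c"
proof -
  let ?dF = "pd (\<lambda>z. fro2 Ns (dimD M Dd) (TWm Rs z)) x c"
  let ?Q = "PF_energy M Nd Rd Dd x"
  note MSE = pd_MSE_scale_point[OF assms]
  have "pd (MSE M Ns Rs Nd Rd Dd L Hbar sig sige) (scale_point a sig x) c
      + ?Q / (a\<^sup>2 * Pt) * pd (pow_con M Ns Rs Dd Pt u) (scale_point a sig x) c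
    = coord_scale a sig c * (pd (MSEs M Ns Rs Nd Rd Dd L Hbar sig sige Pt) x c
        - ?dF * ?Q / Pt + ?Q / (a\<^sup>2 * Pt) * (a\<^sup>2 * ?dF))"
    unfolding MSE(2) pd_pow_con_scale_point(2)[OF s] by (simp add: algebra_simps)
  also have "?Q / (a\<^sup>2 * Pt) * (a\<^sup>2 * ?dF) = ?dF * ?Q / Pt"
    using \<open>a \<noteq> 0\<close> by simp
  finally show ?thesis
    by simp
qed

lemma KKT_scale_point:
  assumes KKT2: "KKT (free_coords M Ns Rs Nd Rd Dd) (MSEs M Ns Rs Nd Rd Dd L Hbar sig sige Pt)
      (um_idx M Ns Rs Nd Rd) um_con ({} :: unit set) (\<lambda>_ _. 0) x"
    and "a \<noteq> 0" and "Pt > 0" and sig: "\<forall>m<M. sig m \<noteq> 0"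
    and balance: "a\<^sup>2 * fro2 Ns (dimD M Dd) (TWm Rs x) = Pt"
  shows "KKT (free_coords M Ns Rs Nd Rd Dd) (MSE M Ns Rs Nd Rd Dd L Hbar sig sige)
      (um_idx M Ns Rs Nd Rd) um_con {()} (pow_con M Ns Rs Dd Pt) (scale_point a sig x)"
proof -
  let ?MSE = "MSE M Ns Rs Nd Rd Dd L Hbar sig sige"
  let ?MSEs = "MSEs M Ns Rs Nd Rd Dd L Hbar sig sige Pt"
  let ?pow = "pow_con M Ns Rs Dd Pt ()"
  let ?y = "scale_point a sig x"
  show ?thesis
  proof (rule KKT_with_active_inequality[OF KKT2, where mu = "PF_energy M Nd Rd Dd x / (a\<^sup>2 * Pt)"])
    show "\<forall>e\<in>um_idx M Ns Rs Nd Rd. um_con e ?y = 0"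
      using KKT2 um_con_scale_point unfolding KKT_def by auto
    show "?pow ?y = 0"
      using balance unfolding pow_con_scale_point by simp
    show "PF_energy M Nd Rd Dd x / (a\<^sup>2 * Pt) \<ge> 0"
      using PF_energy_nonneg \<open>Pt > 0\<close> by simp
  next
    fix c
    assume c: "c \<in> free_coords M Ns Rs Nd Rd Dd" and MSEs: "pdiff ?MSEs x c"
      and um: "\<forall>e\<in>um_idx M Ns Rs Nd Rd. pdiff (um_con e) x c"
    have s: "coord_scale a sig c \<noteq> 0"
      using coord_scale_free_coords_nonzero[OF \<open>a \<noteq> 0\<close> sig c] .
    show "pdiff ?MSE ?y c \<and> pdiff ?pow ?y c
      \<and> pd ?MSE ?y c + PF_energy M Nd Rd Dd x / (a\<^sup>2 * Pt) * pd ?pow ?y c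
        = coord_scale a sig c * pd ?MSEs x c
      \<and> (\<forall>e\<in>um_idx M Ns Rs Nd Rd. pdiff (um_con e) ?y c
          \<and> pd (um_con e) ?y c = coord_scale a sig c * pd (um_con e) x c)"
      using pd_MSE_scale_point(1)[OF s \<open>a \<noteq> 0\<close> sig \<open>Pt > 0\<close> balance MSEs]
        pd_pow_con_scale_point(1)[OF s]
        pd_MSE_pow_con_multiplier[OF s \<open>a \<noteq> 0\<close> sig \<open>Pt > 0\<close> balance MSEs]
        pd_um_con_scale_point[OF s] um
      by simp
  qed
qed

theorem theorem1:
  fixes M Ns Rs :: nat and Nd Rd Dd :: "nat \<Rightarrow> nat"
    and Pt :: real and sig sige :: "nat \<Rightarrow> real"
    and Hbar :: "nat \<Rightarrow> cmat" and L :: "nat \<Rightarrow> nat \<Rightarrow> real"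
    and x :: var
  assumes "M \<ge> 1" and "Ns > 0" and "Rs > 0"
    and "\<forall>m<M. Nd m > 0 \<and> Rd m > 0 \<and> Dd m > 0"
    and "Pt > 0" and "\<forall>m<M. sig m > 0 \<and> sige m \<ge> 0"
    and "is_perm_matrix (dimD M Dd) L"
    and KKT2: "KKT (free_coords M Ns Rs Nd Rd Dd) (MSEs M Ns Rs Nd Rd Dd L Hbar sig sige Pt)
                 (um_idx M Ns Rs Nd Rd) um_con ({} :: unit set) (\<lambda>_ _. 0) x"
    and "fro2 Ns (dimD M Dd) (TWm Rs x) \<noteq> 0"
  shows "let a = sqrt Pt / sqrt (fro2 Ns (dimD M Dd) (TWm Rs x)) in
         KKT (free_coords M Ns Rs Nd Rd Dd) (MSE M Ns Rs Nd Rd Dd L Hbar sig sige)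
             (um_idx M Ns Rs Nd Rd) um_con ({()} :: unit set) (pow_con M Ns Rs Dd Pt)
             (scale_point a sig x)"
proof -
  define F where "F = fro2 Ns (dimD M Dd) (TWm Rs x)"
  have "F > 0"
    using fro2_nonneg assms(9) unfolding F_def by (simp add: order_less_le)
  then have "sqrt Pt / sqrt F \<noteq> 0" and "(sqrt Pt / sqrt F)\<^sup>2 * F = Pt"
    using \<open>Pt > 0\<close> by (auto simp: power_divide)
  moreover have "\<forall>m<M. sig m \<noteq> 0"
    using assms(6) by auto
  ultimately show ?thesis
    using KKT_scale_point[OF KKT2 _ \<open>Pt > 0\<close>] unfolding Let_def F_def by blast
qed

end
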